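(* Assume the setting and hypotheses below, including $L>1$, and suppose $D_M(t)=kD(t)$ with $k>0$ and $D$ a positive continuous $T$-periodic function. Let $c^*(k)=\inf_{\mu>0}\frac1\mu\ln\int_{\mathbb{R}}e^{\mu y}\mathcal{K}(y)dy$ be the spreading speed with this $D_M$. Then $$\lim_{k\to+\infty}\frac{c^*(k)}{\sqrt k}=\inf_{\mu>0}H(\mu,+\infty)\in(0,+\infty),$$ where $$H(\mu,+\infty)=\frac1\mu\ln\Big(e^{\mu^2\int_0^TD(s)ds-\int_0^Td_M(s)ds}+\int_{t_\alpha}^{t_\beta}\partial_\varphi R(s,0)\,e^{-\left(\int_0^{s-\tau(s)}+\int_s^T\right)d_M(\omega)d\omega}\,e^{\mu^2\left(\int_0^{s-\tau(s)}+\int_s^T\right)D(\omega)d\omega}ds\Big).$$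
   Context: Setting. $T>0$; $D_I\ge0$, $d_M,d_I>0$, $\tau>0$, $p\ge0$ are $C^1$ $T$-periodic functions; $h\in C^1([0,\infty);[0,\infty))$; $0<\alpha\le\beta<t_\alpha\le t_\beta<T$ with $t_\alpha-\tau(t_\alpha)=\alpha$, $t_\beta-\tau(t_\beta)=\beta$, $p=0$ on $[0,\alpha]\cup[\beta,T]$; $\tau'<1$; $h(0)=0$, $h(z)\to0$ as $z\to\infty$, $h$ unimodal (increasing then decreasing); $h(\lambda z)\ge\lambda h(z)$ for $\lambda\in(0,1)$. Notation: $\partial_\varphi R(s,0)=(1-\tau'(s))e^{-\int_{s-\tau(s)}^sd_I}p(s-\tau(s))h'(0)$, $\sigma(s)=\int_{s-\tau(s)}^sD_I$, $\overline{k}_M(t,s)=e^{-\int_s^td_M}$, $L=\frac{\overline{k}_M(T,0)}{1-\overline{k}_M(T,0)}\int_{t_\alpha}^{t_\beta}\frac{\partial_\varphi R(s,0)}{\overline{k}_M(s,s-\tau(s))}ds$. The quantity $\int e^{\mu y}\mathcal{K}(y)dy$ equals $e^{\int_0^T[\mu^2D_M-d_M]}+\int_{t_\alpha}^{t_\beta}\partial_\varphi R(s,0)e^{(\int_s^T+\int_0^{s-\tau(s)})[\mu^2D_M(\varsigma)-d_M(\varsigma)]d\varsigma+\mu^2\sigma(s)}ds$. *)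

theory Defs
  imports "HOL-Analysis.Analysis"
begin

definition periodic_fun :: "real \<Rightarrow> (real \<Rightarrow> real) \<Rightarrow> bool" where
  "periodic_fun T f \<longleftrightarrow> (\<forall>t. f (t + T) = f t)"

definition C1_fun :: "(real \<Rightarrow> real) \<Rightarrow> bool" where
  "C1_fun f \<longleftrightarrow> (\<forall>x. f differentiable (at x)) \<and> continuous_on UNIV (deriv f)"

text \<open>\<partial>_\<phi> R(s,0); the argument h'0 stands for h'(0).\<close>
definition dR0 :: "(real \<Rightarrow> real) \<Rightarrow> (real \<Rightarrow> real) \<Rightarrow> (real \<Rightarrow> real) \<Rightarrow> real \<Rightarrow> real \<Rightarrow> real" where
  "dR0 \<tau> dI p h'0 s =
     (1 - deriv \<tau> s) * exp (- integral {s - \<tau> s..s} dI) * p (s - \<tau> s) * h'0"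

definition kbarM :: "(real \<Rightarrow> real) \<Rightarrow> real \<Rightarrow> real \<Rightarrow> real" where
  "kbarM dM t s = exp (- integral {s..t} dM)"

definition sigmaI :: "(real \<Rightarrow> real) \<Rightarrow> (real \<Rightarrow> real) \<Rightarrow> real \<Rightarrow> real" where
  "sigmaI \<tau> DI s = integral {s - \<tau> s..s} DI"

definition Lnum :: "real \<Rightarrow> real \<Rightarrow> real \<Rightarrow> (real \<Rightarrow> real) \<Rightarrow> (real \<Rightarrow> real) \<Rightarrow>
    (real \<Rightarrow> real) \<Rightarrow> (real \<Rightarrow> real) \<Rightarrow> real \<Rightarrow> real" where
  "Lnum T t\<alpha> t\<beta> dM dI \<tau> p h'0 =
     kbarM dM T 0 / (1 - kbarM dM T 0) *
     integral {t\<alpha>..t\<beta>} (\<lambda>s. dR0 \<tau> dI p h'0 s / kbarM dM s (s - \<tau> s))"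

text \<open>The quantity \<integral> e^{\<mu> y} K(y) dy, for a given diffusion D_M.\<close>
definition kernel_mgf :: "real \<Rightarrow> real \<Rightarrow> real \<Rightarrow> (real \<Rightarrow> real) \<Rightarrow> (real \<Rightarrow> real) \<Rightarrow>
    (real \<Rightarrow> real) \<Rightarrow> (real \<Rightarrow> real) \<Rightarrow> (real \<Rightarrow> real) \<Rightarrow> (real \<Rightarrow> real) \<Rightarrow> real \<Rightarrow> real \<Rightarrow> real" where
  "kernel_mgf T t\<alpha> t\<beta> DM dM DI dI \<tau> p h'0 \<mu> =
     exp (integral {0..T} (\<lambda>\<zeta>. \<mu>\<^sup>2 * DM \<zeta> - dM \<zeta>)) +
     integral {t\<alpha>..t\<beta>} (\<lambda>s. dR0 \<tau> dI p h'0 s *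
        exp (integral {s..T} (\<lambda>\<zeta>. \<mu>\<^sup>2 * DM \<zeta> - dM \<zeta>)
             + integral {0..s - \<tau> s} (\<lambda>\<zeta>. \<mu>\<^sup>2 * DM \<zeta> - dM \<zeta>)
             + \<mu>\<^sup>2 * sigmaI \<tau> DI s))"

definition spreading_speed :: "real \<Rightarrow> real \<Rightarrow> real \<Rightarrow> (real \<Rightarrow> real) \<Rightarrow> (real \<Rightarrow> real) \<Rightarrow>
    (real \<Rightarrow> real) \<Rightarrow> (real \<Rightarrow> real) \<Rightarrow> (real \<Rightarrow> real) \<Rightarrow> (real \<Rightarrow> real) \<Rightarrow> real \<Rightarrow> real" where
  "spreading_speed T t\<alpha> t\<beta> DM dM DI dI \<tau> p h'0 =
     (INF \<mu>\<in>{0<..}. (1 / \<mu>) * ln (kernel_mgf T t\<alpha> t\<beta> DM dM DI dI \<tau> p h'0 \<mu>))"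

definition H_infty :: "real \<Rightarrow> real \<Rightarrow> real \<Rightarrow> (real \<Rightarrow> real) \<Rightarrow> (real \<Rightarrow> real) \<Rightarrow>
    (real \<Rightarrow> real) \<Rightarrow> (real \<Rightarrow> real) \<Rightarrow> (real \<Rightarrow> real) \<Rightarrow> real \<Rightarrow> real \<Rightarrow> real" where
  "H_infty T t\<alpha> t\<beta> D dM dI \<tau> p h'0 \<mu> =
     (1 / \<mu>) * ln (
       exp (\<mu>\<^sup>2 * integral {0..T} D - integral {0..T} dM) +
       integral {t\<alpha>..t\<beta>} (\<lambda>s. dR0 \<tau> dI p h'0 s *
          exp (- (integral {0..s - \<tau> s} dM + integral {s..T} dM)) *
          exp (\<mu>\<^sup>2 * (integral {0..s - \<tau> s} D + integral {s..T} D))))"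

end

theory Submission
  imports Defs
begin

text \<open>With \<open>D\<^sub>M = k D\<close> and \<open>\<nu> = \<mu> \<surd>k\<close>, every term in the exponent of the kernel scales with
  \<open>\<nu>\<^sup>2\<close> except the immature diffusion term \<open>\<mu>\<^sup>2 \<sigma>(s)\<close>. Hence the kernel lies between \<open>G(\<nu>)\<close> and
  \<open>e\<^bsup>\<mu>\<^sup>2 max \<sigma>\<^esup> G(\<nu>)\<close>, where \<open>H(\<nu>,+\<infinity>) = ln G(\<nu>) / \<nu>\<close>, so that
  \<open>(1/\<mu>) ln \<integral> e\<^bsup>\<mu>y\<^esup> K(y) dy = \<surd>k H(\<mu>\<surd>k, +\<infinity>) + O(\<mu>)\<close>. Dividing by \<open>\<surd>k\<close> and taking the
  infimum over \<open>\<mu>\<close> gives the limit. The infimum of \<open>H(\<cdot>,+\<infinity>)\<close> is positive because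
  \<open>G(0) > 1\<close> is equivalent to \<open>L > 1\<close>, while \<open>ln G(\<nu>)\<close> grows like \<open>\<nu>\<^sup>2 \<integral>\<^sub>0\<^sup>T D\<close>.\<close>

lemma C1_fun_imp_continuous: "C1_fun f \<Longrightarrow> continuous_on UNIV f"
  unfolding C1_fun_def
  by (meson continuous_at_imp_continuous_on differentiable_imp_continuous_within)

lemma continuous_on_integral_bounds:
  fixes f :: "real \<Rightarrow> real" and u v :: "'a::topological_space \<Rightarrow> real"
  assumes f: "continuous_on {a..b} f" and u: "continuous_on S u" and v: "continuous_on S v"
    and bounds: "\<And>s. s \<in> S \<Longrightarrow> a \<le> u s" "\<And>s. s \<in> S \<Longrightarrow> u s \<le> v s"
      "\<And>s. s \<in> S \<Longrightarrow> v s \<le> b"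
  shows "continuous_on S (\<lambda>s. integral {u s..v s} f)"
proof -
  define F where "F x = integral {a..x} f" for x
  have F: "continuous_on {a..b} F"
    unfolding F_def using f by (intro indefinite_integral_continuous_1 integrable_continuous_interval)
  have uv: "u s \<in> {a..b}" "v s \<in> {a..b}" if "s \<in> S" for s
    using bounds(1-3)[OF that] by auto
  have "continuous_on S (\<lambda>s. F (v s) - F (u s))"
    using uv by (intro continuous_intros continuous_on_compose2[OF F] u v) auto
  moreover have "F (v s) - F (u s) = integral {u s..v s} f" if "s \<in> S" for s
  proof -
    have "f integrable_on {a..v s}"
      using bounds(1-3)[OF that] by (intro integrable_continuous_interval continuous_on_subset[OF f]) auto
    then show ?thesis
      using Henstock_Kurzweil_Integration.integral_combine[of a "u s" "v s" f] bounds(1,2)[OF that]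
      by (simp add: F_def)
  qed
  ultimately show ?thesis by (rule continuous_on_eq) auto
qed

lemma has_real_derivative_nonneg_at_min_atLeast:
  fixes h :: "real \<Rightarrow> real"
  assumes "(h has_real_derivative d) (at a within {a..})" and "\<And>z. a \<le> z \<Longrightarrow> h a \<le> h z"
  shows "0 \<le> d"
proof -
  have "((\<lambda>y. (h y - h a) / (y - a)) \<longlongrightarrow> d) (at a within {a..})"
    using assms(1) has_field_derivative_iff by blast
  moreover have "eventually (\<lambda>y. 0 \<le> (h y - h a) / (y - a)) (at a within {a..})"
    unfolding eventually_at_filter using assms(2) by auto
  moreover have "{a..} - {a} = {a<..}"
    by auto
  then have "at a within {a..} \<noteq> bot"
    by (simp add: at_within_eq_bot_iff)
  ultimately show ?thesis by (rule tendsto_lowerbound)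
qed

lemma integral_le_integral_exp_weight:
  fixes f \<sigma> :: "real \<Rightarrow> real"
  assumes f: "f integrable_on S" and f\<sigma>: "(\<lambda>s. f s * exp (c * \<sigma> s)) integrable_on S"
    and f_nonneg: "\<And>s. s \<in> S \<Longrightarrow> 0 \<le> f s" and \<sigma>_nonneg: "\<And>s. s \<in> S \<Longrightarrow> 0 \<le> \<sigma> s"
    and c: "0 \<le> c"
  shows "integral S f \<le> integral S (\<lambda>s. f s * exp (c * \<sigma> s))"
proof (intro integral_le f f\<sigma>)
  fix s assume "s \<in> S"
  then have "1 \<le> exp (c * \<sigma> s)" and "0 \<le> f s"
    using f_nonneg \<sigma>_nonneg c by auto
  then show "f s \<le> f s * exp (c * \<sigma> s)"
    by (metis mult.right_neutral mult_left_mono)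
qed

lemma integral_exp_weight_le:
  fixes f \<sigma> :: "real \<Rightarrow> real"
  assumes f: "f integrable_on S" and f\<sigma>: "(\<lambda>s. f s * exp (c * \<sigma> s)) integrable_on S"
    and f_nonneg: "\<And>s. s \<in> S \<Longrightarrow> 0 \<le> f s" and \<sigma>_le: "\<And>s. s \<in> S \<Longrightarrow> \<sigma> s \<le> M"
    and c: "0 \<le> c"
  shows "integral S (\<lambda>s. f s * exp (c * \<sigma> s)) \<le> exp (c * M) * integral S f"
proof -
  have "integral S (\<lambda>s. f s * exp (c * \<sigma> s)) \<le> integral S (\<lambda>s. exp (c * M) * f s)"
  proof (rule integral_le[OF f\<sigma>])
    show "(\<lambda>s. exp (c * M) * f s) integrable_on S"
      using integrable_on_cmult_left[OF f] by simp
  next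
    fix s assume "s \<in> S"
    then have "exp (c * \<sigma> s) \<le> exp (c * M)" and "0 \<le> f s"
      using f_nonneg \<sigma>_le c by (auto intro: mult_left_mono)
    then show "f s * exp (c * \<sigma> s) \<le> exp (c * M) * f s"
      by (metis mult.commute mult_left_mono)
  qed
  then show ?thesis
    by simp
qed

lemma ln_div_bounded_below_pos:
  fixes G :: "real \<Rightarrow> real"
  assumes A: "0 < A" and G0: "1 < G 0"
    and G_ge_exp: "\<And>\<nu>. exp (\<nu>\<^sup>2 * A - B) \<le> G \<nu>"
    and G_ge_G0: "\<And>\<nu>. 0 \<le> \<nu> \<Longrightarrow> G 0 \<le> G \<nu>"
  shows "\<exists>c>0. \<forall>\<nu>>0. c \<le> ln (G \<nu>) / \<nu>"
proof -
  define \<nu>1 where "\<nu>1 = sqrt (2 * (\<bar>B\<bar> + 1) / A)"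
  have \<nu>1: "0 < \<nu>1" and \<nu>1_sq: "\<nu>1\<^sup>2 * A = 2 * (\<bar>B\<bar> + 1)"
    unfolding \<nu>1_def using A by auto
  have "min (\<nu>1 * A / 2) (ln (G 0) / \<nu>1) \<le> ln (G \<nu>) / \<nu>" if \<nu>: "0 < \<nu>" for \<nu>
  proof (cases "\<nu> \<le> \<nu>1")
    case True
    have "ln (G 0) \<le> ln (G \<nu>)"
      using G_ge_G0[of \<nu>] G0 \<nu> by simp
    then have "ln (G 0) / \<nu>1 \<le> ln (G \<nu>) / \<nu>"
      using G0 True \<nu> by (meson frac_le less_imp_le ln_gt_zero order.trans)
    then show ?thesis by simp
  next
    case False
    then have "\<nu>1\<^sup>2 * A \<le> \<nu>\<^sup>2 * A"
      using \<nu>1 A by (simp add: power_mono)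
    then have "\<nu>\<^sup>2 * A / 2 \<le> \<nu>\<^sup>2 * A - B"
      using \<nu>1_sq abs_ge_self[of B] by argo
    also have "\<nu>\<^sup>2 * A - B \<le> ln (G \<nu>)"
      using G_ge_exp[of \<nu>] by (metis exp_gt_zero ln_exp ln_le_cancel_iff order_less_le_trans)
    finally have "\<nu> * A / 2 \<le> ln (G \<nu>) / \<nu>"
      using \<nu> by (simp add: field_simps power2_eq_square)
    moreover have "\<nu>1 * A / 2 \<le> \<nu> * A / 2"
      using False A by simp
    ultimately show ?thesis by linarith
  qed
  moreover have "0 < min (\<nu>1 * A / 2) (ln (G 0) / \<nu>1)"
    using \<nu>1 A G0 by simp
  ultimately show ?thesis by blast
qed

lemma tendsto_INF_rescaled:
  fixes H :: "real \<Rightarrow> real" and \<Phi> :: "real \<Rightarrow> real \<Rightarrow> real"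
  assumes bdd: "bdd_below (H ` {0<..})"
    and lower: "\<And>k \<mu>. 0 < k \<Longrightarrow> 0 < \<mu> \<Longrightarrow> sqrt k * H (\<mu> * sqrt k) \<le> \<Phi> k \<mu>"
    and upper: "\<And>k \<mu>. 0 < k \<Longrightarrow> 0 < \<mu> \<Longrightarrow> \<Phi> k \<mu> \<le> sqrt k * H (\<mu> * sqrt k) + \<mu> * C"
  shows "((\<lambda>k. (INF \<mu>\<in>{0<..}. \<Phi> k \<mu>) / sqrt k) \<longlongrightarrow> (INF \<nu>\<in>{0<..}. H \<nu>)) at_top"
proof (rule tendstoI)
  define m where "m = (INF \<nu>\<in>{0<..}. H \<nu>)"
  have \<Phi>_ge: "sqrt k * m \<le> \<Phi> k \<mu>" if k: "0 < k" and \<mu>: "0 < \<mu>" for k \<mu>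
  proof -
    have "m \<le> H (\<mu> * sqrt k)"
      unfolding m_def using k \<mu> by (intro cINF_lower[OF bdd]) simp
    then have "sqrt k * m \<le> sqrt k * H (\<mu> * sqrt k)"
      using k by (intro mult_left_mono) auto
    then show ?thesis
      using lower[OF k \<mu>] by linarith
  qed
  have INF_ge: "m \<le> (INF \<mu>\<in>{0<..}. \<Phi> k \<mu>) / sqrt k" if k: "0 < k" for k
  proof -
    have "sqrt k * m \<le> (INF \<mu>\<in>{0<..}. \<Phi> k \<mu>)"
      using \<Phi>_ge[OF k] by (intro cINF_greatest) auto
    then show ?thesis
      using k by (simp add: pos_le_divide_eq mult.commute)
  qed
  have INF_le: "(INF \<mu>\<in>{0<..}. \<Phi> k \<mu>) / sqrt k \<le> H \<nu> + \<nu> * C / k"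
    if k: "0 < k" and \<nu>: "0 < \<nu>" for k \<nu>
  proof -
    have "bdd_below (\<Phi> k ` {0<..})"
      using \<Phi>_ge[OF k] by (intro bdd_belowI[where m="sqrt k * m"]) auto
    then have "(INF \<mu>\<in>{0<..}. \<Phi> k \<mu>) \<le> \<Phi> k (\<nu> / sqrt k)"
      using k \<nu> by (intro cINF_lower) auto
    also have "\<dots> \<le> sqrt k * H \<nu> + \<nu> / sqrt k * C"
      using upper[of k "\<nu> / sqrt k"] k \<nu> by simp
    also have "\<dots> = sqrt k * (H \<nu> + \<nu> * C / k)"
      using k by (simp add: field_simps real_sqrt_mult_self)
    finally show ?thesis
      using k by (simp add: pos_divide_le_eq mult.commute)
  qed
  fix \<epsilon> :: real assume \<epsilon>: "0 < \<epsilon>"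
  obtain \<nu>0 where \<nu>0: "0 < \<nu>0" "H \<nu>0 < m + \<epsilon> / 2"
    using cINF_less_iff[OF _ bdd, of "m + \<epsilon> / 2"] \<epsilon> unfolding m_def by auto
  show "\<forall>\<^sub>F k in at_top. dist ((INF \<mu>\<in>{0<..}. \<Phi> k \<mu>) / sqrt k) m < \<epsilon>"
    using eventually_gt_at_top[of "max 0 (2 * \<nu>0 * C / \<epsilon>)"]
  proof eventually_elim
    case (elim k)
    then have k: "0 < k" and "2 * \<nu>0 * C < k * \<epsilon>"
      using \<epsilon> by (auto simp: pos_divide_less_eq)
    then have "\<nu>0 * C / k < \<epsilon> / 2"
      by (simp add: divide_less_eq algebra_simps)
    then show ?case
      unfolding dist_real_def abs_less_iff using INF_ge[OF k] INF_le[OF k \<nu>0(1)] \<nu>0(2)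
      by linarith
  qed
qed

lemma mono_diff_self:
  fixes \<tau> :: "real \<Rightarrow> real"
  assumes "\<And>t. \<tau> differentiable (at t)" and "\<And>t. deriv \<tau> t \<le> 1"
  shows "mono (\<lambda>s. s - \<tau> s)"
proof (rule monoI)
  fix a b :: real
  assume "a \<le> b"
  have "DERIV (\<lambda>s. s - \<tau> s) x :> 1 - deriv \<tau> x" for x
    using assms(1)[of x] by (auto intro!: derivative_eq_intros simp: DERIV_deriv_iff_real_differentiable)
  then show "a - \<tau> a \<le> b - \<tau> b"
    using DERIV_nonneg_imp_nondecreasing[OF \<open>a \<le> b\<close>, of "\<lambda>s. s - \<tau> s"] assms(2) by force
qed

definition int_outside_delay :: "real \<Rightarrow> (real \<Rightarrow> real) \<Rightarrow> (real \<Rightarrow> real) \<Rightarrow> real \<Rightarrow> real" where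
  "int_outside_delay T \<tau> f s = integral {0..s - \<tau> s} f + integral {s..T} f"

text \<open>Only continuity and sign conditions enter the limit.\<close>

locale delay_kernel =
  fixes T t\<alpha> t\<beta> :: real and D dM DI dI \<tau> p :: "real \<Rightarrow> real" and h'0 :: real
  assumes cont_D: "continuous_on UNIV D" and cont_dM: "continuous_on UNIV dM"
    and cont_DI: "continuous_on UNIV DI" and cont_dI: "continuous_on UNIV dI"
    and cont_\<tau>: "continuous_on UNIV \<tau>" and cont_deriv_\<tau>: "continuous_on UNIV (deriv \<tau>)"
    and cont_p: "continuous_on UNIV p"
    and D_pos: "\<And>t. 0 < D t" and DI_nonneg: "\<And>t. 0 \<le> DI t"
    and \<tau>_pos: "\<And>t. 0 < \<tau> t" and deriv_\<tau>_lt_1: "\<And>t. deriv \<tau> t < 1"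
    and p_nonneg: "\<And>t. 0 \<le> p t" and h'0_nonneg: "0 \<le> h'0"
    and T_pos: "0 < T" and window: "0 \<le> t\<alpha>" "t\<beta> \<le> T"
    and delay_nonneg: "\<And>s. s \<in> {t\<alpha>..t\<beta>} \<Longrightarrow> 0 \<le> s - \<tau> s"
begin

lemma delay_window:
  assumes "s \<in> {t\<alpha>..t\<beta>}"
  shows "\<tau> s \<le> s" "s - \<tau> s \<le> s" "s - \<tau> s \<le> T" "0 \<le> s" "s \<le> T"
  using assms delay_nonneg \<tau>_pos[of s] window by auto

lemma continuous_on_delay_start: "continuous_on A (\<lambda>s. s - \<tau> s)"
  by (intro continuous_intros continuous_on_subset[OF cont_\<tau>]) simp

lemma continuous_on_int_outside_delay:
  assumes "continuous_on UNIV f"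
  shows "continuous_on {t\<alpha>..t\<beta>} (int_outside_delay T \<tau> f)"
proof -
  have "continuous_on {t\<alpha>..t\<beta>} (\<lambda>s. integral {0..s - \<tau> s} f)"
    by (rule continuous_on_integral_bounds[where a=0 and b=T])
      (auto intro: continuous_on_subset[OF assms] continuous_on_delay_start simp: delay_window)
  moreover have "continuous_on {t\<alpha>..t\<beta>} (\<lambda>s. integral {s..T} f)"
    by (rule continuous_on_integral_bounds[where a=0 and b=T])
      (auto intro: continuous_on_subset[OF assms] continuous_on_id continuous_on_const simp: delay_window)
  ultimately show ?thesis
    unfolding int_outside_delay_def by (intro continuous_intros)
qed

lemma continuous_on_sigmaI: "continuous_on {t\<alpha>..t\<beta>} (sigmaI \<tau> DI)"
  unfolding sigmaI_def
  by (rule continuous_on_integral_bounds[where a=0 and b=T])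
    (auto intro: continuous_on_subset[OF cont_DI] continuous_on_delay_start continuous_on_id
      simp: delay_window)

lemma continuous_on_dR0: "continuous_on {t\<alpha>..t\<beta>} (dR0 \<tau> dI p h'0)"
proof -
  have "continuous_on {t\<alpha>..t\<beta>} (\<lambda>s. integral {s - \<tau> s..s} dI)"
    by (rule continuous_on_integral_bounds[where a=0 and b=T])
      (auto intro: continuous_on_subset[OF cont_dI] continuous_on_delay_start continuous_on_id
        simp: delay_window)
  moreover have "continuous_on {t\<alpha>..t\<beta>} (\<lambda>s. p (s - \<tau> s))"
    by (intro continuous_on_compose2[OF cont_p continuous_on_delay_start]) auto
  ultimately show ?thesis
    unfolding dR0_def by (intro continuous_intros continuous_on_subset[OF cont_deriv_\<tau>]) auto
qed

lemma dR0_nonneg: "0 \<le> dR0 \<tau> dI p h'0 s"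
  unfolding dR0_def using deriv_\<tau>_lt_1[of s] p_nonneg h'0_nonneg by simp

lemma int_outside_delay_nonneg:
  assumes "continuous_on UNIV f" "\<And>t. 0 \<le> f t"
  shows "0 \<le> int_outside_delay T \<tau> f s"
  unfolding int_outside_delay_def using assms
  by (intro add_nonneg_nonneg integral_nonneg integrable_continuous_interval
      continuous_on_subset[OF assms(1)]) auto

definition mgf_infty :: "real \<Rightarrow> real" where
  "mgf_infty \<nu> = exp (\<nu>\<^sup>2 * integral {0..T} D - integral {0..T} dM) +
     integral {t\<alpha>..t\<beta>} (\<lambda>s. dR0 \<tau> dI p h'0 s * exp (- int_outside_delay T \<tau> dM s) *
       exp (\<nu>\<^sup>2 * int_outside_delay T \<tau> D s))"

lemma H_infty_eq_mgf_infty: "H_infty T t\<alpha> t\<beta> D dM dI \<tau> p h'0 \<nu> = 1 / \<nu> * ln (mgf_infty \<nu>)"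
  unfolding H_infty_def mgf_infty_def int_outside_delay_def ..

lemma integrable_on_kernel_integrand:
  "(\<lambda>s. dR0 \<tau> dI p h'0 s * exp (- int_outside_delay T \<tau> dM s) *
      exp (c * int_outside_delay T \<tau> D s) * exp (d * sigmaI \<tau> DI s)) integrable_on {t\<alpha>..t\<beta>}"
  by (intro integrable_continuous_interval continuous_intros continuous_on_dR0 continuous_on_sigmaI
      continuous_on_int_outside_delay cont_D cont_dM)

lemma mgf_infty_integral_nonneg:
  "0 \<le> integral {t\<alpha>..t\<beta>} (\<lambda>s. dR0 \<tau> dI p h'0 s * exp (- int_outside_delay T \<tau> dM s) *
     exp (c * int_outside_delay T \<tau> D s))"
  using integrable_on_kernel_integrand[of c 0] by (intro integral_nonneg) (simp_all add: dR0_nonneg)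

lemma exp_le_mgf_infty:
  "exp (\<nu>\<^sup>2 * integral {0..T} D - integral {0..T} dM) \<le> mgf_infty \<nu>"
  unfolding mgf_infty_def using mgf_infty_integral_nonneg by simp

lemma mgf_infty_pos: "0 < mgf_infty \<nu>"
  using exp_le_mgf_infty[of \<nu>] by (meson exp_gt_zero less_le_trans)

lemma integral_D_pos: "0 < integral {0..T} D"
  using integral_less[of 0 T "\<lambda>_. 0" D] T_pos D_pos continuous_on_subset[OF cont_D] by simp

lemma mgf_infty_ge_0: "mgf_infty 0 \<le> mgf_infty \<nu>"
proof -
  define f where "f = (\<lambda>s. dR0 \<tau> dI p h'0 s * exp (- int_outside_delay T \<tau> dM s))"
  have "integral {t\<alpha>..t\<beta>} f \<le> integral {t\<alpha>..t\<beta>} (\<lambda>s. f s * exp (\<nu>\<^sup>2 * int_outside_delay T \<tau> D s))"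
  proof (rule integral_le_integral_exp_weight)
    show "f integrable_on {t\<alpha>..t\<beta>}"
      using integrable_on_kernel_integrand[of 0 0] by (simp add: f_def)
    show "(\<lambda>s. f s * exp (\<nu>\<^sup>2 * int_outside_delay T \<tau> D s)) integrable_on {t\<alpha>..t\<beta>}"
      using integrable_on_kernel_integrand[of "\<nu>\<^sup>2" 0] by (simp add: f_def)
    show "0 \<le> int_outside_delay T \<tau> D s" for s
      using D_pos by (intro int_outside_delay_nonneg cont_D less_imp_le)
  qed (simp_all add: f_def dR0_nonneg)
  then show ?thesis
    unfolding mgf_infty_def f_def using integral_D_pos by (intro add_mono) simp_all
qed

lemma int_outside_delay_eq:
  assumes f: "continuous_on UNIV f" and s: "s \<in> {t\<alpha>..t\<beta>}"
  shows "int_outside_delay T \<tau> f s = integral {0..T} f - integral {s - \<tau> s..s} f"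
proof -
  have int: "f integrable_on {a..b}" for a b
    by (intro integrable_continuous_interval continuous_on_subset[OF f]) simp
  have "integral {0..s - \<tau> s} f + integral {s - \<tau> s..s} f = integral {0..s} f"
    using delay_window[OF s] by (intro Henstock_Kurzweil_Integration.integral_combine int) simp_all
  moreover have "integral {0..s} f + integral {s..T} f = integral {0..T} f"
    using delay_window[OF s] by (intro Henstock_Kurzweil_Integration.integral_combine int) simp_all
  ultimately show ?thesis
    unfolding int_outside_delay_def by linarith
qed

text \<open>With \<open>E = e\<^bsup>-\<integral>\<^sub>0\<^sup>T d\<^sub>M\<^esup>\<close> one has \<open>G(0) = E (1 + I)\<close> and \<open>L = E I / (1 - E)\<close>.\<close>

lemma mgf_infty_0_gt_1:
  assumes L_gt_1: "1 < Lnum T t\<alpha> t\<beta> dM dI \<tau> p h'0"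
  shows "1 < mgf_infty 0"
proof -
  define E where "E = kbarM dM T 0"
  define I where "I = integral {t\<alpha>..t\<beta>} (\<lambda>s. dR0 \<tau> dI p h'0 s / kbarM dM s (s - \<tau> s))"
  have E_pos: "0 < E"
    unfolding E_def kbarM_def by simp
  have "dR0 \<tau> dI p h'0 s * exp (- int_outside_delay T \<tau> dM s) =
      E * (dR0 \<tau> dI p h'0 s / kbarM dM s (s - \<tau> s))" if "s \<in> {t\<alpha>..t\<beta>}" for s
    unfolding int_outside_delay_eq[OF cont_dM that] E_def kbarM_def
    by (simp add: exp_diff exp_minus field_simps)
  then have "integral {t\<alpha>..t\<beta>} (\<lambda>s. dR0 \<tau> dI p h'0 s * exp (- int_outside_delay T \<tau> dM s)) = E * I"
    unfolding I_def by (subst integral_mult_right[symmetric], intro integral_cong) simp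
  then have mgf_0: "mgf_infty 0 = E + E * I" and "0 \<le> E * I"
    unfolding mgf_infty_def E_def kbarM_def using mgf_infty_integral_nonneg[of 0] by simp_all
  then have "0 \<le> I"
    using E_pos by (simp add: zero_le_mult_iff)
  moreover have L: "1 < E * I / (1 - E)"
    using L_gt_1 unfolding Lnum_def E_def I_def by simp
  ultimately have "E < 1"
    using E_pos divide_nonneg_nonpos[of "E * I" "1 - E"] by (cases "E < 1") auto
  then have "1 - E < E * I"
    using L by (simp add: less_divide_eq)
  then show ?thesis
    unfolding mgf_0 by linarith
qed

lemma H_infty_bounded_below_pos:
  assumes "1 < Lnum T t\<alpha> t\<beta> dM dI \<tau> p h'0"
  shows "\<exists>c>0. \<forall>\<nu>>0. c \<le> H_infty T t\<alpha> t\<beta> D dM dI \<tau> p h'0 \<nu>"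
  using ln_div_bounded_below_pos[OF integral_D_pos mgf_infty_0_gt_1[OF assms] exp_le_mgf_infty]
    mgf_infty_ge_0
  unfolding H_infty_eq_mgf_infty by simp

lemma kernel_mgf_scaled:
  "kernel_mgf T t\<alpha> t\<beta> (\<lambda>t. k * D t) dM DI dI \<tau> p h'0 \<mu> =
     exp (\<mu>\<^sup>2 * k * integral {0..T} D - integral {0..T} dM) +
     integral {t\<alpha>..t\<beta>} (\<lambda>s. dR0 \<tau> dI p h'0 s * exp (- int_outside_delay T \<tau> dM s) *
       exp (\<mu>\<^sup>2 * k * int_outside_delay T \<tau> D s) * exp (\<mu>\<^sup>2 * sigmaI \<tau> DI s))"
proof -
  have int: "f integrable_on {x..y}" if "continuous_on UNIV f" for f :: "real \<Rightarrow> real" and x y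
    by (intro integrable_continuous_interval continuous_on_subset[OF that]) simp
  have lin: "integral {x..y} (\<lambda>\<zeta>. \<mu>\<^sup>2 * (k * D \<zeta>) - dM \<zeta>) =
      \<mu>\<^sup>2 * k * integral {x..y} D - integral {x..y} dM" for x y
    by (subst integral_diff) (auto intro!: int continuous_intros cont_D cont_dM simp: mult.assoc)
  show ?thesis
    unfolding kernel_mgf_def lin int_outside_delay_def
    by (simp add: exp_add[symmetric] algebra_simps)
qed

lemma kernel_mgf_scaled_bounds:
  assumes k: "0 < k" and \<mu>: "0 < \<mu>" and M: "0 \<le> M" "\<And>s. s \<in> {t\<alpha>..t\<beta>} \<Longrightarrow> sigmaI \<tau> DI s \<le> M"
  defines "K \<equiv> kernel_mgf T t\<alpha> t\<beta> (\<lambda>t. k * D t) dM DI dI \<tau> p h'0 \<mu>"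
    and "H \<equiv> H_infty T t\<alpha> t\<beta> D dM dI \<tau> p h'0"
  shows "sqrt k * H (\<mu> * sqrt k) \<le> 1 / \<mu> * ln K"
    and "1 / \<mu> * ln K \<le> sqrt k * H (\<mu> * sqrt k) + \<mu> * M"
proof -
  define \<nu> where "\<nu> = \<mu> * sqrt k"
  have \<nu>_sq: "\<nu>\<^sup>2 = \<mu>\<^sup>2 * k"
    unfolding \<nu>_def using k by (simp add: power_mult_distrib)
  define E where "E = exp (\<nu>\<^sup>2 * integral {0..T} D - integral {0..T} dM)"
  define f where "f = (\<lambda>s. dR0 \<tau> dI p h'0 s * exp (- int_outside_delay T \<tau> dM s) *
      exp (\<nu>\<^sup>2 * int_outside_delay T \<tau> D s))"
  have K_eq: "K = E + integral {t\<alpha>..t\<beta>} (\<lambda>s. f s * exp (\<mu>\<^sup>2 * sigmaI \<tau> DI s))"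
    unfolding K_def kernel_mgf_scaled E_def f_def \<nu>_sq by (simp add: mult.assoc)
  have G_eq: "mgf_infty \<nu> = E + integral {t\<alpha>..t\<beta>} f"
    unfolding mgf_infty_def E_def f_def ..
  have f_int: "f integrable_on {t\<alpha>..t\<beta>}"
    using integrable_on_kernel_integrand[of "\<nu>\<^sup>2" 0] by (simp add: f_def)
  have f\<sigma>_int: "(\<lambda>s. f s * exp (\<mu>\<^sup>2 * sigmaI \<tau> DI s)) integrable_on {t\<alpha>..t\<beta>}"
    using integrable_on_kernel_integrand[of "\<nu>\<^sup>2" "\<mu>\<^sup>2"] by (simp add: f_def)
  have f_nonneg: "0 \<le> f s" for s
    by (simp add: f_def dR0_nonneg)
  have \<sigma>_nonneg: "0 \<le> sigmaI \<tau> DI s" for s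
    unfolding sigmaI_def using DI_nonneg
    by (intro integral_nonneg integrable_continuous_interval continuous_on_subset[OF cont_DI]) auto
  have G_le_K: "mgf_infty \<nu> \<le> K"
    unfolding K_eq G_eq
    using integral_le_integral_exp_weight[OF f_int f\<sigma>_int f_nonneg \<sigma>_nonneg] by simp
  have "K \<le> E + exp (\<mu>\<^sup>2 * M) * integral {t\<alpha>..t\<beta>} f"
    unfolding K_eq using integral_exp_weight_le[OF f_int f\<sigma>_int f_nonneg M(2)] by simp
  also have "\<dots> \<le> exp (\<mu>\<^sup>2 * M) * mgf_infty \<nu>"
    unfolding G_eq distrib_left using M(1) by (simp add: E_def)
  finally have K_le: "K \<le> exp (\<mu>\<^sup>2 * M) * mgf_infty \<nu>" .
  have ln_G_le: "ln (mgf_infty \<nu>) \<le> ln K"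
    using G_le_K mgf_infty_pos[of \<nu>] by simp
  have "ln K \<le> ln (exp (\<mu>\<^sup>2 * M) * mgf_infty \<nu>)"
    using K_le mgf_infty_pos[of \<nu>] G_le_K by simp
  also have "\<dots> = \<mu>\<^sup>2 * M + ln (mgf_infty \<nu>)"
    using mgf_infty_pos[of \<nu>] by (simp add: ln_mult)
  finally have ln_K_le: "1 / \<mu> * ln K \<le> 1 / \<mu> * ln (mgf_infty \<nu>) + \<mu> * M"
    using \<mu> by (simp add: field_simps power2_eq_square)
  have H_eq: "sqrt k * H (\<mu> * sqrt k) = 1 / \<mu> * ln (mgf_infty \<nu>)"
    unfolding H_def H_infty_eq_mgf_infty \<nu>_def using k by simp
  show "sqrt k * H (\<mu> * sqrt k) \<le> 1 / \<mu> * ln K"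
    unfolding H_eq using ln_G_le \<mu> by (simp add: divide_right_mono)
  show "1 / \<mu> * ln K \<le> sqrt k * H (\<mu> * sqrt k) + \<mu> * M"
    unfolding H_eq using ln_K_le .
qed

theorem spreading_speed_rescaled_tendsto:
  assumes "1 < Lnum T t\<alpha> t\<beta> dM dI \<tau> p h'0"
  defines "H \<equiv> H_infty T t\<alpha> t\<beta> D dM dI \<tau> p h'0"
  shows "((\<lambda>k. spreading_speed T t\<alpha> t\<beta> (\<lambda>t. k * D t) dM DI dI \<tau> p h'0 / sqrt k)
            \<longlongrightarrow> (INF \<mu>\<in>{0<..}. H \<mu>)) at_top
         \<and> bdd_below (H ` {0<..}) \<and> 0 < (INF \<mu>\<in>{0<..}. H \<mu>)"
proof -
  obtain c where c: "0 < c" "\<And>\<nu>. 0 < \<nu> \<Longrightarrow> c \<le> H \<nu>"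
    using H_infty_bounded_below_pos[OF assms(1)] unfolding H_def by blast
  then have bdd: "bdd_below (H ` {0<..})"
    by (intro bdd_belowI[where m=c]) auto
  have "c \<le> (INF \<mu>\<in>{0<..}. H \<mu>)"
    using c by (intro cINF_greatest) auto
  moreover obtain M where M: "0 < M" "\<And>s. s \<in> {t\<alpha>..t\<beta>} \<Longrightarrow> \<bar>sigmaI \<tau> DI s\<bar> \<le> M"
    using compact_imp_bounded[OF compact_continuous_image[OF continuous_on_sigmaI]]
    unfolding bounded_pos by auto
  ultimately show ?thesis
    using c(1) bdd kernel_mgf_scaled_bounds[of _ _ M, OF _ _ _ M(2)[THEN abs_le_D1]] M(1)
    unfolding spreading_speed_def H_def by (auto intro!: tendsto_INF_rescaled)
qed

end

theorem proposition4p6: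
  fixes T \<alpha> \<beta> t\<alpha> t\<beta> :: real
    and DI dM dI \<tau> p D :: "real \<Rightarrow> real"
    and h h' :: "real \<Rightarrow> real"
  assumes T_pos: "T > 0"
    and DI: "C1_fun DI" "periodic_fun T DI" "\<forall>t. DI t \<ge> 0"
    and dM: "C1_fun dM" "periodic_fun T dM" "\<forall>t. dM t > 0"
    and dI: "C1_fun dI" "periodic_fun T dI" "\<forall>t. dI t > 0"
    and tau: "C1_fun \<tau>" "periodic_fun T \<tau>" "\<forall>t. \<tau> t > 0" "\<forall>t. deriv \<tau> t < 1"
    and p: "C1_fun p" "periodic_fun T p" "\<forall>t. p t \<ge> 0"
      "\<forall>t\<in>{0..\<alpha>} \<union> {\<beta>..T}. p t = 0"
    and times: "0 < \<alpha>" "\<alpha> \<le> \<beta>" "\<beta> < t\<alpha>" "t\<alpha> \<le> t\<beta>" "t\<beta> < T"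
      "t\<alpha> - \<tau> t\<alpha> = \<alpha>" "t\<beta> - \<tau> t\<beta> = \<beta>"
    and h_nonneg: "\<forall>z\<ge>0. h z \<ge> 0"
    and h_C1: "\<forall>z\<ge>0. (h has_real_derivative h' z) (at z within {0..})"
      "continuous_on {0..} h'"
    and h0: "h 0 = 0"
    and h_lim: "(h \<longlongrightarrow> 0) at_top"
    and h_unimodal: "\<exists>z0\<ge>0. mono_on {0..z0} h \<and> antimono_on {z0..} h"
    and h_sub: "\<forall>l\<in>{0<..<1}. \<forall>z\<ge>0. h (l * z) \<ge> l * h z"
    and L_gt1: "Lnum T t\<alpha> t\<beta> dM dI \<tau> p (h' 0) > 1"
    and D: "continuous_on UNIV D" "periodic_fun T D" "\<forall>t. D t > 0"
  shows "((\<lambda>k. spreading_speed T t\<alpha> t\<beta> (\<lambda>t. k * D t) dM DI dI \<tau> p (h' 0) / sqrt k)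
            \<longlongrightarrow> (INF \<mu>\<in>{0<..}. H_infty T t\<alpha> t\<beta> D dM dI \<tau> p (h' 0) \<mu>)) at_top
         \<and> bdd_below ((\<lambda>\<mu>. H_infty T t\<alpha> t\<beta> D dM dI \<tau> p (h' 0) \<mu>) ` {0<..})
         \<and> (INF \<mu>\<in>{0<..}. H_infty T t\<alpha> t\<beta> D dM dI \<tau> p (h' 0) \<mu>) > 0"
proof -
  have "0 \<le> h' 0"
    by (rule has_real_derivative_nonneg_at_min_atLeast[of h "h' 0" 0])
      (simp_all add: h_C1(1) h0 h_nonneg)
  moreover have "0 \<le> s - \<tau> s" if "s \<in> {t\<alpha>..t\<beta>}" for s
  proof -
    have "mono (\<lambda>s. s - \<tau> s)"
      using tau(1,4) unfolding C1_fun_def by (intro mono_diff_self less_imp_le) auto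
    then have "t\<alpha> - \<tau> t\<alpha> \<le> s - \<tau> s"
      using that by (auto dest: monoD)
    then show ?thesis
      using times by linarith
  qed
  moreover have "continuous_on UNIV (deriv \<tau>)"
    using tau(1) unfolding C1_fun_def ..
  ultimately have "delay_kernel T t\<alpha> t\<beta> D dM DI dI \<tau> p (h' 0)"
    using C1_fun_imp_continuous[OF DI(1)] C1_fun_imp_continuous[OF dM(1)]
      C1_fun_imp_continuous[OF dI(1)] C1_fun_imp_continuous[OF tau(1)]
      C1_fun_imp_continuous[OF p(1)] D DI(3) tau(3,4) p(3) T_pos times
    by unfold_locales simp_all
  then show ?thesis
    by (rule delay_kernel.spreading_speed_rescaled_tendsto[OF _ L_gt1])
qed

end
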